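(* Let $n\ge 1$ and let $\pi$ be a uniformly random permutation of $[n]=\{1,\dots,n\}$. For $1\le i\le n$, let the reduction of $\pi$ to $[i]$ be the permutation $\sigma$ of $[i]$ defined by: for $j\in[i]$, $\sigma(j)=\pi^{m}(j)$, where $m\ge 1$ is the least positive integer with $\pi^{m}(j)\in[i]$ (equivalently, $\sigma$ is obtained by deleting the elements $i+1,\dots,n$ from the cycle notation of $\pi$). Let $X$ be the largest $i\in\{1,\dots,n\}$ such that the reduction of $\pi$ to $[i]$ is unicyclic (consists of a single cycle). Then \[\mathbb P(X=i)=\frac{1}{i}-\frac{1}{i+1}=\frac{1}{i(i+1)}\quad (1\le i\le n-1),\qquad \mathbb P(X=n)=\frac1n.\]
   Context: A permutation is unicyclic if its cycle decomposition consists of exactly one cycle. The reduction to $[1]$ is the identity on $\{1\}$, which counts as unicyclic. *)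

theory Defs
  imports "HOL-Probability.Probability" "HOL-Combinatorics.Permutations"
begin

definition reduction :: "(nat \<Rightarrow> nat) \<Rightarrow> nat \<Rightarrow> nat \<Rightarrow> nat" where
  "reduction p i j =
     (if j \<in> {1..i}
      then (p ^^ (LEAST m. m \<ge> 1 \<and> (p ^^ m) j \<in> {1..i})) j
      else j)"

definition unicyclic :: "(nat \<Rightarrow> nat) \<Rightarrow> nat set \<Rightarrow> bool" where
  "unicyclic \<sigma> S \<longleftrightarrow> S \<noteq> {} \<and> (\<forall>x\<in>S. \<forall>y\<in>S. \<exists>k. (\<sigma> ^^ k) x = y)"

definition X_stat :: "nat \<Rightarrow> (nat \<Rightarrow> nat) \<Rightarrow> nat" where
  "X_stat n p = Max {i \<in> {1..n}. unicyclic (reduction p i) {1..i}}"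

end

theory Submission
  imports Defs "HOL-Combinatorics.Cycles"
begin

text \<open>Reduction to \<open>[i]\<close> preserves which elements of \<open>[i]\<close> lie on a common cycle, so the
  reduction is unicyclic exactly when \<open>1, \<dots>, i\<close> lie on one cycle of \<open>\<pi>\<close>; call this event
  \<open>U\<^sub>i\<close>. The events decrease in \<open>i\<close>, and \<open>X = i\<close> means \<open>U\<^sub>i\<close> but not \<open>U\<^sub>i\<^sub>+\<^sub>1\<close>.
  Every permutation of \<open>[n+1]\<close> arises uniquely by inserting \<open>n+1\<close> into the cycle notation of
  a permutation of \<open>[n]\<close> at one of \<open>n+1\<close> places; this does not affect \<open>U\<^sub>i\<close> for \<open>i \<le> n\<close>,
  and yields \<open>U\<^sub>n\<^sub>+\<^sub>1\<close> iff the permutation of \<open>[n]\<close> satisfies \<open>U\<^sub>n\<close> and \<open>n+1\<close> is not made a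
  fixed point. By induction on \<open>n\<close>, \<open>P(U\<^sub>i) = 1/i\<close>.\<close>

definition reach :: "('a \<Rightarrow> 'a) \<Rightarrow> 'a \<Rightarrow> 'a \<Rightarrow> bool" where
  "reach f x y \<longleftrightarrow> (\<exists>k. (f ^^ k) x = y)"

lemma reach_funpow [simp]: "reach f x ((f ^^ k) x)"
  unfolding reach_def by blast

lemma reach_refl [simp]: "reach f x x"
  using reach_funpow[of f x 0] by simp

lemma reach_trans: "reach f x y \<Longrightarrow> reach f y z \<Longrightarrow> reach f x z"
  unfolding reach_def by (metis comp_apply funpow_add)

lemma reach_step: "reach f (f x) y \<Longrightarrow> reach f x y"
  unfolding reach_def by (metis comp_apply funpow_Suc_right)

lemma unicyclic_reach: "unicyclic \<sigma> S \<longleftrightarrow> S \<noteq> {} \<and> (\<forall>x\<in>S. \<forall>y\<in>S. reach \<sigma> x y)"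
  by (simp add: unicyclic_def reach_def)

lemma unicyclic_atLeastAtMost_mono:
  "unicyclic \<sigma> {1..i} \<Longrightarrow> 1 \<le> j \<Longrightarrow> j \<le> i \<Longrightarrow> unicyclic \<sigma> {1..j}"
  by (auto simp: unicyclic_reach)

lemma unicyclic_singleton [simp]: "unicyclic \<sigma> {x}"
  by (simp add: unicyclic_reach)

lemma permutation_returns:
  assumes "permutation p" "j \<in> A"
  shows "\<exists>m\<ge>1. (p ^^ m) j \<in> A"
proof -
  obtain N where "p ^^ N = id" "N > 0"
    using permutation_is_nilpotent[OF assms(1)] by blast
  with assms(2) show ?thesis by (intro exI[of _ N]) auto
qed

lemma reduction_first_return:
  assumes "permutation p" "j \<in> {1..i}"
  obtains m where "m \<ge> 1" "(p ^^ m) j \<in> {1..i}" "reduction p i j = (p ^^ m) j"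
    "\<And>m'. m' \<ge> 1 \<Longrightarrow> (p ^^ m') j \<in> {1..i} \<Longrightarrow> m \<le> m'"
proof
  let ?m = "LEAST m. m \<ge> 1 \<and> (p ^^ m) j \<in> {1..i}"
  show "?m \<ge> 1" "(p ^^ ?m) j \<in> {1..i}"
    using LeastI_ex[OF permutation_returns[OF assms]] by auto
  show "reduction p i j = (p ^^ ?m) j"
    using assms(2) by (simp add: reduction_def)
  show "\<And>m'. m' \<ge> 1 \<Longrightarrow> (p ^^ m') j \<in> {1..i} \<Longrightarrow> ?m \<le> m'"
    by (simp add: Least_le)
qed

lemma reduction_in:
  "permutation p \<Longrightarrow> j \<in> {1..i} \<Longrightarrow> reduction p i j \<in> {1..i}"
  by (metis reduction_first_return)

lemma reach_reduction_imp_reach: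
  assumes "permutation p" "x \<in> {1..i}" "reach (reduction p i) x y"
  shows "reach p x y"
proof -
  have "((reduction p i) ^^ k) x \<in> {1..i} \<and> reach p x (((reduction p i) ^^ k) x)" for k
  proof (induction k)
    case (Suc k)
    let ?y = "((reduction p i) ^^ k) x"
    obtain m where "reduction p i ?y = (p ^^ m) ?y"
      using reduction_first_return[OF assms(1)] Suc by blast
    then have "reach p ?y (reduction p i ?y)" by simp
    with Suc show ?case
      using reduction_in[OF assms(1)] by (auto intro: reach_trans)
  qed (use assms(2) in simp)
  with assms(3) show ?thesis unfolding reach_def by blast
qed

lemma reach_reduction_funpow:
  assumes "permutation p"
  shows "x \<in> {1..i} \<Longrightarrow> (p ^^ k) x \<in> {1..i} \<Longrightarrow> reach (reduction p i) x ((p ^^ k) x)"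
proof (induction k arbitrary: x rule: less_induct)
  case (less k)
  show ?case
  proof (cases "k = 0")
    case False
    obtain m where m: "m \<ge> 1" "(p ^^ m) x \<in> {1..i}" "reduction p i x = (p ^^ m) x" and "m \<le> k"
      using reduction_first_return[OF assms less.prems(1)] False less.prems(2) by (metis less_one not_le)
    then have "(p ^^ k) x = (p ^^ (k - m)) ((p ^^ m) x)"
      by (metis comp_apply funpow_add le_add_diff_inverse2)
    moreover have "k - m < k" using m(1) False by simp
    ultimately show ?thesis
      using less.IH[of "k - m" "(p ^^ m) x"] m less.prems(2) reach_step[of "reduction p i" x]
      by simp
  qed simp
qed

lemma reach_reduction_iff:
  assumes "permutation p" "x \<in> {1..i}" "y \<in> {1..i}"
  shows "reach (reduction p i) x y \<longleftrightarrow> reach p x y"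
  using reach_reduction_imp_reach[OF assms(1,2)] reach_reduction_funpow[OF assms(1,2)] assms(3)
  unfolding reach_def by metis

lemma unicyclic_reduction_iff:
  "permutation p \<Longrightarrow> unicyclic (reduction p i) {1..i} \<longleftrightarrow> unicyclic p {1..i}"
  by (simp add: unicyclic_reach reach_reduction_iff)

lemma reduction_outside: "j \<notin> {1..i} \<Longrightarrow> reduction p i j = j"
  unfolding reduction_def by (rule if_not_P)

lemma reduction_eq_step:
  "j \<in> {1..i} \<Longrightarrow> p j \<in> {1..i} \<Longrightarrow> reduction p i j = p j"
  unfolding reduction_def by (subst Least_equality[of _ 1]) auto

lemma reduction_eq_two_steps:
  assumes "j \<in> {1..i}" "p j \<notin> {1..i}" "p (p j) \<in> {1..i}"
  shows "reduction p i j = p (p j)"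
proof -
  have "(LEAST m. m \<ge> 1 \<and> (p ^^ m) j \<in> {1..i}) = 2"
  proof (rule Least_equality)
    show "2 \<ge> (1::nat) \<and> (p ^^ 2) j \<in> {1..i}"
      using assms(3) by (simp add: numeral_2_eq_2)
    fix m :: nat assume "m \<ge> 1 \<and> (p ^^ m) j \<in> {1..i}"
    moreover from this have "m \<noteq> 1" using assms(2) by auto
    ultimately show "2 \<le> m" by linarith
  qed
  with assms(1) show ?thesis by (simp add: reduction_def numeral_2_eq_2)
qed

text \<open>Inserting \<open>Suc n\<close> into the cycle notation of \<open>\<sigma>\<close> immediately before \<open>b\<close>,
  or as a new fixed point if \<open>b = Suc n\<close>.\<close>
definition cycle_insert :: "nat \<Rightarrow> nat \<Rightarrow> (nat \<Rightarrow> nat) \<Rightarrow> nat \<Rightarrow> nat" where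
  "cycle_insert n b \<sigma> = Transposition.transpose (Suc n) b \<circ> \<sigma>"

lemma cycle_insert_inject:
  assumes "\<sigma> permutes {1..n}" "\<tau> permutes {1..n}"
    and eq: "cycle_insert n b \<sigma> = cycle_insert n c \<tau>"
  shows "b = c \<and> \<sigma> = \<tau>"
proof
  have "\<sigma> (Suc n) = Suc n" "\<tau> (Suc n) = Suc n"
    using assms(1,2) by (auto simp: permutes_not_in)
  then show "b = c"
    using fun_cong[OF eq, of "Suc n"] by (auto simp: cycle_insert_def transpose_def)
  then show "\<sigma> = \<tau>"
    using eq unfolding cycle_insert_def by (metis comp_assoc id_comp swap_id_idempotent)
qed

lemma bij_betw_cycle_insert:
  "bij_betw (\<lambda>(b, \<sigma>). cycle_insert n b \<sigma>)
     ({1..Suc n} \<times> {\<sigma>. \<sigma> permutes {1..n}}) {p. p permutes {1..Suc n}}"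
proof (rule bij_betw_imageI)
  show "inj_on (\<lambda>(b, \<sigma>). cycle_insert n b \<sigma>) ({1..Suc n} \<times> {\<sigma>. \<sigma> permutes {1..n}})"
    unfolding inj_on_def using cycle_insert_inject by fast
  have "{1..Suc n} = insert (Suc n) {1..n}" by auto
  then show "(\<lambda>(b, \<sigma>). cycle_insert n b \<sigma>) ` ({1..Suc n} \<times> {\<sigma>. \<sigma> permutes {1..n}})
      = {p. p permutes {1..Suc n}}"
    using permutes_insert[of "Suc n" "{1..n}"] by (auto simp: cycle_insert_def Sigma_def)
qed

lemma reduction_cycle_insert:
  assumes "\<sigma> permutes {1..n}" "b \<in> {1..Suc n}"
  shows "reduction (cycle_insert n b \<sigma>) n = \<sigma>"
proof
  fix j
  let ?p = "cycle_insert n b \<sigma>"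
  have fix_top: "\<sigma> (Suc n) = Suc n" using assms(1) by (simp add: permutes_not_in)
  show "reduction ?p n j = \<sigma> j"
  proof (cases "j \<in> {1..n}")
    case False
    then show ?thesis by (simp add: reduction_outside permutes_not_in[OF assms(1)])
  next
    case True
    then have "\<sigma> j \<in> {1..n}" by (simp only: permutes_in_image[OF assms(1)])
    then show ?thesis
      using True assms(2) fix_top reduction_eq_step[of j n ?p] reduction_eq_two_steps[of j n ?p]
      by (cases "\<sigma> j = b") (auto simp: cycle_insert_def transpose_def)
  qed
qed

lemma permutes_cycle_insert:
  "\<sigma> permutes {1..n} \<Longrightarrow> b \<in> {1..Suc n} \<Longrightarrow> cycle_insert n b \<sigma> permutes {1..Suc n}"
  using bij_betw_apply[OF bij_betw_cycle_insert, of "(b, \<sigma>)" n] by simp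

lemma unicyclic_cycle_insert_le:
  assumes "\<sigma> permutes {1..n}" "b \<in> {1..Suc n}" "i \<le> n"
  shows "unicyclic (cycle_insert n b \<sigma>) {1..i} \<longleftrightarrow> unicyclic \<sigma> {1..i}"
proof -
  let ?p = "cycle_insert n b \<sigma>"
  have "permutation ?p"
    using permutes_cycle_insert[OF assms(1,2)] permutes_imp_permutation by blast
  then have "reach ?p x y \<longleftrightarrow> reach \<sigma> x y" if "x \<in> {1..i}" "y \<in> {1..i}" for x y
    using reach_reduction_iff[of ?p x n y] reduction_cycle_insert[OF assms(1,2)] that assms(3)
    by simp
  then show ?thesis by (auto simp: unicyclic_reach)
qed

lemma unicyclic_through:
  "S \<noteq> {} \<Longrightarrow> (\<And>x. x \<in> S \<Longrightarrow> reach \<sigma> x c) \<Longrightarrow> (\<And>y. y \<in> S \<Longrightarrow> reach \<sigma> c y)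
    \<Longrightarrow> unicyclic \<sigma> S"
  by (auto simp: unicyclic_reach intro: reach_trans)

lemma unicyclic_cycle_insert_top:
  assumes "\<sigma> permutes {1..n}" "b \<in> {1..Suc n}" "n \<ge> 1"
  shows "unicyclic (cycle_insert n b \<sigma>) {1..Suc n} \<longleftrightarrow> unicyclic \<sigma> {1..n} \<and> b \<noteq> Suc n"
proof -
  let ?p = "cycle_insert n b \<sigma>"
  have fix_top: "\<sigma> (Suc n) = Suc n" using assms(1) by (simp add: permutes_not_in)
  show ?thesis
  proof
    assume uni: "unicyclic ?p {1..Suc n}"
    then have "unicyclic \<sigma> {1..n}"
      using unicyclic_atLeastAtMost_mono[OF uni, of n] unicyclic_cycle_insert_le[OF assms(1,2) order.refl]
        assms(3) by simp
    moreover have "b \<noteq> Suc n"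
    proof
      assume "b = Suc n"
      then have "reach \<sigma> 1 (Suc n)"
        using uni assms(3) by (simp add: cycle_insert_def unicyclic_reach)
      then obtain k where "(\<sigma> ^^ k) 1 = Suc n" unfolding reach_def by blast
      moreover have "(\<sigma> ^^ k) 1 \<in> {1..n}"
        using permutes_in_funpow_image[OF assms(1)] assms(3) by simp
      ultimately show False by simp
    qed
    ultimately show "unicyclic \<sigma> {1..n} \<and> b \<noteq> Suc n" ..
  next
    assume "unicyclic \<sigma> {1..n} \<and> b \<noteq> Suc n"
    then have uni: "unicyclic ?p {1..n}" and b: "b \<in> {1..n}"
      using unicyclic_cycle_insert_le[OF assms(1,2)] assms(2) by auto
    then obtain a where a: "a \<in> {1..n}" "\<sigma> a = b"
      using permutes_image[OF assms(1)] by (metis imageE)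
    have "?p a = Suc n" "?p (Suc n) = b"
      using a b fix_top by (auto simp: cycle_insert_def transpose_def)
    have pa: "?p a = Suc n" and pN: "?p (Suc n) = b"
      using a b fix_top by (auto simp: cycle_insert_def transpose_def)
    show "unicyclic ?p {1..Suc n}"
    proof (rule unicyclic_through[of _ _ "Suc n"])
      fix x assume x: "x \<in> {1..Suc n}"
      show "reach ?p x (Suc n)"
      proof (cases "x = Suc n")
        case False
        then have "reach ?p x a" using uni a(1) x by (auto simp: unicyclic_reach)
        moreover have "reach ?p a (Suc n)" using pa reach_funpow[of ?p a 1] by simp
        ultimately show ?thesis by (rule reach_trans)
      qed simp
    next
      fix y assume y: "y \<in> {1..Suc n}"
      show "reach ?p (Suc n) y"
      proof (cases "y = Suc n")
        case False
        then have "reach ?p (?p (Suc n)) y" using uni b y pN by (auto simp: unicyclic_reach)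
        then show ?thesis by (rule reach_step)
      qed simp
    qed simp
  qed
qed

lemma card_permutes_Suc_filter:
  "card {p. p permutes {1..Suc n} \<and> Q p}
     = card {(b, \<sigma>). b \<in> {1..Suc n} \<and> \<sigma> permutes {1..n} \<and> Q (cycle_insert n b \<sigma>)}"
proof -
  have "bij_betw (\<lambda>(b, \<sigma>). cycle_insert n b \<sigma>)
      {z \<in> {1..Suc n} \<times> {\<sigma>. \<sigma> permutes {1..n}}. Q (case z of (b, \<sigma>) \<Rightarrow> cycle_insert n b \<sigma>)}
      {p \<in> {p. p permutes {1..Suc n}}. Q p}"
    by (rule bij_betw_Collect[OF bij_betw_cycle_insert]) simp
  moreover have "{z \<in> {1..Suc n} \<times> {\<sigma>. \<sigma> permutes {1..n}}. Q (case z of (b, \<sigma>) \<Rightarrow> cycle_insert n b \<sigma>)}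
      = {(b, \<sigma>). b \<in> {1..Suc n} \<and> \<sigma> permutes {1..n} \<and> Q (cycle_insert n b \<sigma>)}"
    by auto
  ultimately show ?thesis
    using bij_betw_same_card by fastforce
qed

lemma card_permutes_unicyclic_prefix:
  "1 \<le> i \<Longrightarrow> i \<le> n \<Longrightarrow> i * card {p. p permutes {1..n} \<and> unicyclic p {1..i}} = fact n"
proof (induction n arbitrary: i)
  case (Suc n)
  let ?C = "\<lambda>j. card {\<sigma>. \<sigma> permutes {1..n} \<and> unicyclic \<sigma> {1..j}}"
  let ?inserts = "{(b, \<sigma>). b \<in> {1..Suc n} \<and> \<sigma> permutes {1..n} \<and> unicyclic (cycle_insert n b \<sigma>) {1..i}}"
  show ?case
  proof (cases "i \<le> n")
    case True
    have "?inserts = {1..Suc n} \<times> {\<sigma>. \<sigma> permutes {1..n} \<and> unicyclic \<sigma> {1..i}}"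
      using unicyclic_cycle_insert_le[OF _ _ True] by auto
    then have "card {p. p permutes {1..Suc n} \<and> unicyclic p {1..i}} = Suc n * ?C i"
      unfolding card_permutes_Suc_filter by (simp only: card_cartesian_product card_atLeastAtMost diff_Suc_1)
    then have "i * card {p. p permutes {1..Suc n} \<and> unicyclic p {1..i}} = Suc n * (i * ?C i)"
      by (simp only: mult.left_commute)
    then show ?thesis using Suc.IH[OF Suc.prems(1) True] by simp
  next
    case False
    then have i: "i = Suc n" using Suc.prems(2) by simp
    show ?thesis
    proof (cases "n = 0")
      case False
      then have n: "n \<ge> 1" by simp
      have "?inserts = {1..n} \<times> {\<sigma>. \<sigma> permutes {1..n} \<and> unicyclic \<sigma> {1..n}}"
        using unicyclic_cycle_insert_top[OF _ _ n] i by auto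
      then have "card {p. p permutes {1..Suc n} \<and> unicyclic p {1..i}} = n * ?C n"
        unfolding card_permutes_Suc_filter by (simp only: card_cartesian_product card_atLeastAtMost diff_Suc_1)
      then have "i * card {p. p permutes {1..Suc n} \<and> unicyclic p {1..i}} = Suc n * (n * ?C n)"
        using i by (simp only: mult.left_commute)
      then show ?thesis using Suc.IH[OF n order.refl] by simp
    qed (use i in \<open>simp add: card_permutations\<close>)
  qed
qed simp

lemma X_stat_eq_iff:
  assumes "p permutes {1..n}" "1 \<le> i" "i \<le> n"
  shows "X_stat n p = i \<longleftrightarrow> unicyclic p {1..i} \<and> (i < n \<longrightarrow> \<not> unicyclic p {1..Suc i})"
proof -
  let ?A = "{j \<in> {1..n}. unicyclic p {1..j}}"
  have "permutation p" using permutes_imp_permutation[OF finite_atLeastAtMost assms(1)] .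
  then have X: "X_stat n p = Max ?A" by (simp only: X_stat_def unicyclic_reduction_iff)
  have fin: "finite ?A" and ne: "?A \<noteq> {}"
    using assms(2,3) by (auto intro!: exI[of _ 1])
  show ?thesis
  proof
    assume "X_stat n p = i"
    then have i: "i = Max ?A" using X by simp
    then have "unicyclic p {1..i}" using Max_in[OF fin ne] by simp
    moreover have "\<not> unicyclic p {1..Suc i}" if "i < n"
      using Max_ge[OF fin, of "Suc i"] i that by fastforce
    ultimately show "unicyclic p {1..i} \<and> (i < n \<longrightarrow> \<not> unicyclic p {1..Suc i})" by blast
  next
    assume i: "unicyclic p {1..i} \<and> (i < n \<longrightarrow> \<not> unicyclic p {1..Suc i})"
    have "j \<le> i" if "j \<in> ?A" for j
    proof (rule ccontr)
      assume "\<not> j \<le> i"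
      then show False
        using that i unicyclic_atLeastAtMost_mono[of p j "Suc i"] by auto
    qed
    then have "Max ?A = i" using i assms(2,3) by (intro Max_eqI[OF fin]) auto
    then show "X_stat n p = i" using X by simp
  qed
qed

lemma permutations_atLeastAtMost_nonempty: "{p. p permutes {1..n::nat}} \<noteq> {}"
  using permutes_id by blast

lemma set_pmf_of_permutations:
  "set_pmf (pmf_of_set {p. p permutes {1..n::nat}}) = {p. p permutes {1..n}}"
  by (rule set_pmf_of_set[OF permutations_atLeastAtMost_nonempty finite_permutations[OF finite_atLeastAtMost]])

lemma measure_pmf_of_permutations:
  "measure_pmf.prob (pmf_of_set {p. p permutes {1..n::nat}}) A
     = card ({p. p permutes {1..n}} \<inter> A) / fact n"
  using measure_pmf_of_set[OF permutations_atLeastAtMost_nonempty finite_permutations[OF finite_atLeastAtMost]]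
    card_permutations[of "{1..n}" n] by simp

lemma prob_unicyclic_prefix:
  assumes "1 \<le> i" "i \<le> n"
  shows "measure_pmf.prob (pmf_of_set {p. p permutes {1..n}}) {p. unicyclic p {1..i}} = 1 / i"
proof -
  let ?P = "{p. p permutes {1..n}}"
  have "real i * card (?P \<inter> {p. unicyclic p {1..i}}) = fact n"
    using card_permutes_unicyclic_prefix[OF assms] by (simp add: Collect_conj_eq flip: of_nat_mult)
  then have "real (card (?P \<inter> {p. unicyclic p {1..i}})) = fact n / i"
    using assms(1) by (simp add: field_simps)
  then show ?thesis unfolding measure_pmf_of_permutations by simp
qed

lemma prob_X_stat_below:
  assumes "1 \<le> i" "i < n"
  shows "measure_pmf.prob (pmf_of_set {p. p permutes {1..n}}) {p. X_stat n p = i}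
           = 1 / real i - 1 / real (i + 1)"
proof -
  let ?P = "{p. p permutes {1..n}}" and ?M = "pmf_of_set {p. p permutes {1..n}}"
  let ?A = "\<lambda>j. {p. unicyclic p {1..j}}"
  have "set_pmf ?M = ?P" by (rule set_pmf_of_permutations)
  moreover have "X_stat n p = i \<longleftrightarrow> p \<in> ?A i - ?A (Suc i)" if "p \<in> ?P" for p
    using X_stat_eq_iff[of p n i] that assms by simp
  then have "{p. X_stat n p = i} \<inter> ?P = (?A i - ?A (Suc i)) \<inter> ?P" by blast
  ultimately have "measure_pmf.prob ?M {p. X_stat n p = i} = measure_pmf.prob ?M (?A i - ?A (Suc i))"
    by (metis measure_Int_set_pmf)
  also have "\<dots> = measure_pmf.prob ?M (?A i) - measure_pmf.prob ?M (?A (Suc i))"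
    using unicyclic_atLeastAtMost_mono assms(1) by (intro measure_pmf.finite_measure_Diff) auto
  also have "\<dots> = 1 / real i - 1 / real (i + 1)"
    using prob_unicyclic_prefix assms by simp
  finally show ?thesis .
qed

lemma prob_X_stat_top:
  assumes "n \<ge> 1"
  shows "measure_pmf.prob (pmf_of_set {p. p permutes {1..n}}) {p. X_stat n p = n} = 1 / n"
proof -
  let ?P = "{p. p permutes {1..n}}" and ?M = "pmf_of_set {p. p permutes {1..n}}"
  have "set_pmf ?M = ?P" by (rule set_pmf_of_permutations)
  moreover have "X_stat n p = n \<longleftrightarrow> unicyclic p {1..n}" if "p \<in> ?P" for p
    using X_stat_eq_iff[of p n n] that assms by simp
  then have "{p. X_stat n p = n} \<inter> ?P = {p. unicyclic p {1..n}} \<inter> ?P" by blast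
  ultimately show ?thesis
    using prob_unicyclic_prefix[OF assms order.refl] by (metis measure_Int_set_pmf)
qed

theorem mainTheorem1:
  fixes n i :: nat
  assumes "n \<ge> 1"
  defines "M \<equiv> pmf_of_set {p. p permutes {1..n}}"
  shows "(1 \<le> i \<and> i \<le> n - 1 \<longrightarrow>
            measure_pmf.prob M {p. X_stat n p = i} = 1 / real i - 1 / real (i + 1)
          \<and> measure_pmf.prob M {p. X_stat n p = i} = 1 / (real i * real (i + 1)))
       \<and> measure_pmf.prob M {p. X_stat n p = n} = 1 / real n"
proof (intro conjI impI)
  assume i: "1 \<le> i \<and> i \<le> n - 1"
  then have "i < n" using assms by linarith
  with i show "measure_pmf.prob M {p. X_stat n p = i} = 1 / real i - 1 / real (i + 1)"
    unfolding M_def by (intro prob_X_stat_below) auto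
  with i show "measure_pmf.prob M {p. X_stat n p = i} = 1 / (real i * real (i + 1))"
    by (simp add: field_simps)
next
  show "measure_pmf.prob M {p. X_stat n p = n} = 1 / real n"
    unfolding M_def using prob_X_stat_top[OF assms(1)] .
qed

end
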